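(* Fix a binary subcarrier assignment and consider the optimization problem over $\{\tilde\gamma_k\}_{k=1}^K$, $\{\tilde M_{k,s}\}_{k\le K,s\le S}$, $\{T_k^{\rm com,ul}\}$, $\{T_k^{\rm com,dl}\}$: $$\min\ \frac I\eta\sum_{k=1}^K\frac{|\mathcal D_k|}{|\mathcal D|}(1-\tilde\gamma_k)+\frac{V\eta}{\sqrt{|\mathcal D|}}\sqrt{\sum_{k=1}^K\frac1{-\tilde\gamma_k^2+a_k}}$$ subject to, for all $k$ (and all $(k,s)$ where indicated): $T_k^{\rm com,dl}+\frac{C_k|\mathcal D_k|}{f_k}+T_k^{\rm com,ul}\le T_0$; $\sum_{s=1}^S\frac{\tilde M_{k,s}(2^{R^{\rm ul}_{k,s}/B}-1)\sigma^2Q}{|h^{\rm ul}_{k,s}|^2R^{\rm ul}_{k,s}}+C_k|\mathcal D_k|\Omega_kf_k^2+\xi_k\le E_{k,0}$; $\sum_{s=1}^S\tilde M_{k,s}\ge\tilde\gamma_kM$; $0\le\tilde\gamma_k<1$; $T_k^{\rm com,dl}\ge\tilde M_{k,s}Q/R^{\rm dl}_{k,s}$ for all $(k,s)$; $T_k^{\rm com,ul}\ge\tilde M_{k,s}Q/R^{\rm ul}_{k,s}$ for all $(k,s)$. This problem is convex (over the domain where the objective is defined, i.e. $\tilde\gamma_k^2<a_k$ for all $k$).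
   Context: All of the following are fixed positive constants: $I=U'(n_1+n_2)\mathcal H^2\mathcal G^4$, $\eta$, $V=\sqrt{6C/(\delta\lambda)}$, $|\mathcal D_k|$ and $|\mathcal D|=\sum_k|\mathcal D_k|$, $a_k=\frac{2\lambda+\Lambda_{k,\min}}{2\lambda}$ (with $\lambda>0$, $a_k>0$), $C_k$ (processor operations per sample), $f_k$ (processor frequency), $T_0$ (latency budget), $B$ (subcarrier bandwidth), $\sigma^2$ (noise power), $Q$ (bits per parameter), channel gains $h^{\rm ul}_{k,s}$, uplink and downlink rates $R^{\rm ul}_{k,s},R^{\rm dl}_{k,s}$, $\Omega_k$, $\xi_k$, energy budgets $E_{k,0}$, and $M=(n_1+n_2)r$. Here $\tilde\gamma_k=1-\gamma_k$ where $\gamma_k$ is device $k$'s dropout rate, and $\tilde M_{k,s}$ is the number of parameters device $k$ transmits on subcarrier $s$. *)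

theory Defs
  imports "HOL-Analysis.Analysis"
begin

text \<open>Devices are indexed by a finite type 'k (K = CARD('k)), subcarriers by a
finite type 's (S = CARD('s)). A decision variable is a tuple
(gamma_tilde, M_tilde, T_com_ul, T_com_dl) in real^'k * real^'s^'k * real^'k * real^'k.\<close>

definition a_coef :: "real \<Rightarrow> real \<Rightarrow> real" where
  "a_coef lam Lmin = (2 * lam + Lmin) / (2 * lam)"

definition objective ::
  "real \<Rightarrow> real \<Rightarrow> real \<Rightarrow> real^'k \<Rightarrow> real^'k \<Rightarrow> real^'k \<Rightarrow> real" where
  "objective I eta V Dk a g =
     I / eta * (\<Sum>k\<in>UNIV. Dk$k / (\<Sum>j\<in>UNIV. Dk$j) * (1 - g$k))
   + V * eta / sqrt (\<Sum>j\<in>UNIV. Dk$j) * sqrt (\<Sum>k\<in>UNIV. 1 / (- ((g$k)^2) + a$k))"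

definition feasible_set ::
  "real^'k \<Rightarrow> real^'k \<Rightarrow> real^'k \<Rightarrow> real \<Rightarrow> real \<Rightarrow> real \<Rightarrow> real \<Rightarrow>
   real^'s^'k \<Rightarrow> real^'s^'k \<Rightarrow> real^'s^'k \<Rightarrow> real^'k \<Rightarrow> real^'k \<Rightarrow> real^'k \<Rightarrow> real \<Rightarrow>
   ((real^'k) \<times> (real^'s^'k) \<times> (real^'k) \<times> (real^'k)) set" where
  "feasible_set Ck Dk f T0 B sigma2 Q h Rul Rdl Omega xi E0 M =
    {(g, Mt, Tul, Tdl).
      (\<forall>k. Tdl$k + Ck$k * Dk$k / f$k + Tul$k \<le> T0) \<and>
      (\<forall>k. (\<Sum>s\<in>UNIV. Mt$k$s * (2 powr (Rul$k$s / B) - 1) * sigma2 * Q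
                          / ((\<bar>h$k$s\<bar>)^2 * Rul$k$s))
             + Ck$k * Dk$k * Omega$k * (f$k)^2 + xi$k \<le> E0$k) \<and>
      (\<forall>k. (\<Sum>s\<in>UNIV. Mt$k$s) \<ge> g$k * M) \<and>
      (\<forall>k. 0 \<le> g$k \<and> g$k < 1) \<and>
      (\<forall>k s. Tdl$k \<ge> Mt$k$s * Q / Rdl$k$s) \<and>
      (\<forall>k s. Tul$k \<ge> Mt$k$s * Q / Rul$k$s)}"

definition objective_domain ::
  "real^'k \<Rightarrow> ((real^'k) \<times> (real^'s^'k) \<times> (real^'k) \<times> (real^'k)) set" where
  "objective_domain a = {(g, Mt, Tul, Tdl). \<forall>k. (g$k)^2 < a$k}"

end

theory Submission
  imports Defs
begin

(* Every constraint is affine in the decision variables, so the feasible set is an intersection of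
   half-spaces, and the domain g_k^2 < a_k is a product of open intervals. In the objective the
   first term is affine in g, and the second is a nonnegative multiple of the Euclidean norm of the
   vector with entries 1 / sqrt (a_k - g_k^2). Each entry is convex and nonnegative, being the
   decreasing convex function 1 / sqrt p of the concave a_k - g_k^2; and the Euclidean norm is
   convex and monotone on nonnegative vectors, so the composite is convex. *)

lemma convex_on_powr_nonpos:
  fixes p :: real
  assumes "p \<le> 0"
  shows "convex_on {0<..} (\<lambda>x. x powr p)"
proof (rule f''_ge0_imp_convex)
  show "((\<lambda>x. x powr p) has_real_derivative p * x powr (p - 1)) (at x)" if "x \<in> {0<..}" for x
    using that by (auto intro!: derivative_eq_intros)
  show "((\<lambda>x. p * x powr (p - 1)) has_real_derivative p * ((p - 1) * x powr (p - 2))) (at x)"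
    if "x \<in> {0<..}" for x
    using that by (auto intro!: derivative_eq_intros simp: algebra_simps)
  show "0 \<le> p * ((p - 1) * x powr (p - 2))" for x
    using assms by (intro mult_nonpos_nonpos mult_nonpos_nonneg) auto
qed auto

lemma convex_on_cong:
  assumes "\<And>x. x \<in> S \<Longrightarrow> f x = g x"
  shows "convex_on S f \<longleftrightarrow> convex_on S g"
  using assms by (auto simp: convex_on_def convex_def)

lemma convex_on_inverse_sqrt: "convex_on {0<..} (\<lambda>x::real. 1 / sqrt x)"
proof -
  have "convex_on {0<..} (\<lambda>x::real. x powr - (1/2))"
    by (rule convex_on_powr_nonpos) simp
  moreover have "x powr - (1/2) = 1 / sqrt x" if "x \<in> {0<..}" for x :: real
    using that by (simp add: powr_minus_divide powr_half_sqrt)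
  ultimately show ?thesis
    using convex_on_cong[of "{0<..}" "\<lambda>x. x powr - (1/2)" "\<lambda>x. 1 / sqrt x"] by blast
qed

lemma convex_sublevel_less:
  assumes "convex_on S f"
  shows "convex {x \<in> S. f x < c}"
proof (rule convexI)
  fix x y and u v :: real assume x: "x \<in> {x \<in> S. f x < c}" and y: "y \<in> {x \<in> S. f x < c}"
    and uv: "0 \<le> u" "0 \<le> v" "u + v = 1"
  have "f (u *\<^sub>R x + v *\<^sub>R y) \<le> u * f x + v * f y"
    using assms x y uv by (auto simp: convex_on_def)
  also have "\<dots> < c"
    using x y uv by (intro convex_bound_lt) auto
  finally show "u *\<^sub>R x + v *\<^sub>R y \<in> {x \<in> S. f x < c}"
    using assms x y uv by (auto simp: convex_on_def convex_def)
qed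

lemma convex_on_antimono_compose_concave:
  assumes "concave_on S g" "convex_on T h" "antimono_on T h" "g ` S \<subseteq> T"
  shows "convex_on S (\<lambda>x. h (g x))"
proof -
  have "h (g (u *\<^sub>R x + v *\<^sub>R y)) \<le> u * h (g x) + v * h (g y)"
    if "x \<in> S" "y \<in> S" "0 \<le> u" "0 \<le> v" "u + v = 1" for x y u v
  proof -
    have mix: "u * g x + v * g y \<in> T"
      using that assms(2,4) convex_on_imp_convex[OF assms(2)] by (auto simp: convex_def image_subset_iff)
    have "u * g x + v * g y \<le> g (u *\<^sub>R x + v *\<^sub>R y)"
      using assms(1) that by (auto simp: concave_on_iff)
    moreover have "g (u *\<^sub>R x + v *\<^sub>R y) \<in> T"
      using assms(1,4) that concave_on_imp_convex[OF assms(1)] by (auto simp: convex_def)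
    ultimately have "h (g (u *\<^sub>R x + v *\<^sub>R y)) \<le> h (u * g x + v * g y)"
      using assms(3) mix by (auto simp: monotone_on_def)
    also have "\<dots> \<le> u * h (g x) + v * h (g y)"
      using assms(2,4) that by (auto simp: convex_on_def image_subset_iff)
    finally show ?thesis .
  qed
  then show ?thesis
    using concave_on_imp_convex[OF assms(1)] by (simp add: convex_on_def)
qed

lemma convex_on_inverse_sqrt_diff_square:
  "convex_on {t. t\<^sup>2 < a} (\<lambda>t::real. 1 / sqrt (a - t\<^sup>2))"
proof (rule convex_on_antimono_compose_concave[where T = "{0<..}" and h = "\<lambda>x. 1 / sqrt x"
                                                  and g = "\<lambda>t. a - t\<^sup>2"])
  have "convex {t \<in> UNIV. t\<^sup>2 < a}"
    by (rule convex_sublevel_less[OF convex_power2])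
  then show "concave_on {t. t\<^sup>2 < a} (\<lambda>t::real. a - t\<^sup>2)"
    by (intro concave_on_diff concave_on_const[THEN iffD2] convex_on_subset[OF convex_power2]) auto
  show "antimono_on {0<..} (\<lambda>x::real. 1 / sqrt x)"
    by (auto simp: monotone_on_def intro!: divide_left_mono mult_pos_pos)
qed (auto simp: convex_on_inverse_sqrt)

lemma convex_on_L2_set:
  assumes "convex S"
    and "\<And>i. i \<in> A \<Longrightarrow> convex_on S (f i)"
    and "\<And>i x. i \<in> A \<Longrightarrow> x \<in> S \<Longrightarrow> 0 \<le> f i x"
  shows "convex_on S (\<lambda>x. L2_set (\<lambda>i. f i x) A)"
proof (rule convex_onI[OF _ assms(1)])
  fix t :: real and x y assume t: "0 < t" "t < 1" and xy: "x \<in> S" "y \<in> S"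
  let ?z = "(1 - t) *\<^sub>R x + t *\<^sub>R y"
  have "?z \<in> S"
    using assms(1) t xy by (simp add: convex_alt)
  then have "L2_set (\<lambda>i. f i ?z) A \<le> L2_set (\<lambda>i. (1 - t) * f i x + t * f i y) A"
    using assms(2,3) t xy by (intro L2_set_mono convex_onD) auto
  also have "\<dots> \<le> L2_set (\<lambda>i. (1 - t) * f i x) A + L2_set (\<lambda>i. t * f i y) A"
    by (rule L2_set_triangle_ineq)
  also have "\<dots> = (1 - t) * L2_set (\<lambda>i. f i x) A + t * L2_set (\<lambda>i. f i y) A"
    using t by (simp add: L2_set_right_distrib)
  finally show "L2_set (\<lambda>i. f i ?z) A \<le> (1 - t) * L2_set (\<lambda>i. f i x) A + t * L2_set (\<lambda>i. f i y) A" .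
qed

lemma convex_on_linear_vimage:
  assumes "linear h" "convex_on S f"
  shows "convex_on (h -` S) (\<lambda>x. f (h x))"
  using assms convex_linear_vimage[OF assms(1) convex_on_imp_convex[OF assms(2)]]
  by (auto simp: convex_on_def linear_add linear_scale)

lemma convex_feasible_set:
  "convex (feasible_set Ck Dk f T0 B sigma2 Q h Rul Rdl Omega xi E0 M)"
proof -
  define e where "e k s = (2 powr (Rul$k$s / B) - 1) * sigma2 * Q / ((\<bar>h$k$s\<bar>)^2 * Rul$k$s)"
    for k s
  have eq: "feasible_set Ck Dk f T0 B sigma2 Q h Rul Rdl Omega xi E0 M =
      (\<Inter>k. (\<lambda>(g, Mt, Tul, Tdl). Tdl$k + Tul$k) -` {..T0 - Ck$k * Dk$k / f$k})
    \<inter> (\<Inter>k. (\<lambda>(g, Mt, Tul, Tdl). \<Sum>s\<in>UNIV. Mt$k$s * e k s)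
              -` {..E0$k - Ck$k * Dk$k * Omega$k * (f$k)^2 - xi$k})
    \<inter> (\<Inter>k. (\<lambda>(g, Mt, Tul, Tdl). g$k * M - (\<Sum>s\<in>UNIV. Mt$k$s)) -` {..0})
    \<inter> (\<Inter>k. (\<lambda>(g, Mt, Tul, Tdl). g$k) -` {0..<1})
    \<inter> (\<Inter>k s. (\<lambda>(g, Mt, Tul, Tdl). Mt$k$s * Q / Rdl$k$s - Tdl$k) -` {..0})
    \<inter> (\<Inter>k s. (\<lambda>(g, Mt, Tul, Tdl). Mt$k$s * Q / Rul$k$s - Tul$k) -` {..0})"
    by (auto simp: feasible_set_def e_def le_diff_eq add_ac mult.assoc)
  show ?thesis
    unfolding eq
    by (intro convex_Int convex_INT convex_linear_vimage convex_real_interval linearI;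
        simp add: case_prod_beta ring_distribs add_divide_distrib diff_divide_distrib mult.assoc
                  sum.distrib sum_distrib_left)
qed

lemma convex_on_objective:
  fixes a Dk :: "real^'k"
  assumes "0 \<le> I" "0 \<le> eta" "0 \<le> V" "\<forall>k. 0 \<le> Dk$k"
  shows "convex_on {g. \<forall>k. (g$k)\<^sup>2 < a$k} (objective I eta V Dk a)"
proof -
  let ?G = "{g::real^'k. \<forall>k. (g$k)\<^sup>2 < a$k}"
  define w where "w k = Dk$k / (\<Sum>j\<in>UNIV. Dk$j)" for k
  have coord: "convex_on ((\<lambda>g. g$k) -` {t. t\<^sup>2 < a$k}) (\<lambda>g::real^'k. 1 / sqrt (a$k - (g$k)\<^sup>2))"
    for k
    by (rule convex_on_linear_vimage[OF bounded_linear.linear[OF bounded_linear_vec_nth]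
                                        convex_on_inverse_sqrt_diff_square])
  have G: "?G = (\<Inter>k. (\<lambda>g. g$k) -` {t. t\<^sup>2 < a$k})"
    by auto
  have "convex ?G"
    unfolding G by (intro convex_INT convex_on_imp_convex[OF coord])
  have root: "convex_on ?G (\<lambda>g. L2_set (\<lambda>k. 1 / sqrt (a$k - (g$k)\<^sup>2)) UNIV)"
    using \<open>convex ?G\<close> by (intro convex_on_L2_set convex_on_subset[OF coord]) (auto simp: less_imp_le)
  have affine: "convex_on ?G (\<lambda>g. \<Sum>k\<in>UNIV. w k * (1 - g$k))"
    by (rule convex_onI[OF _ \<open>convex ?G\<close>])
       (simp add: ring_distribs sum.distrib sum_subtractf sum_distrib_left mult.left_commute)
  have obj: "objective I eta V Dk a g = I / eta * (\<Sum>k\<in>UNIV. w k * (1 - g$k))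
      + V * eta / sqrt (\<Sum>j\<in>UNIV. Dk$j) * L2_set (\<lambda>k. 1 / sqrt (a$k - (g$k)\<^sup>2)) UNIV"
    if "g \<in> ?G" for g
  proof -
    have "(1 / sqrt (a$k - (g$k)\<^sup>2))\<^sup>2 = 1 / (- (g$k)\<^sup>2 + a$k)" for k
      using that by (auto simp: power_divide less_imp_le)
    then show ?thesis
      by (simp add: objective_def w_def L2_set_def)
  qed
  have "convex_on ?G (\<lambda>g. I / eta * (\<Sum>k\<in>UNIV. w k * (1 - g$k))
      + V * eta / sqrt (\<Sum>j\<in>UNIV. Dk$j) * L2_set (\<lambda>k. 1 / sqrt (a$k - (g$k)\<^sup>2)) UNIV)"
    (is "convex_on ?G ?F")
    using assms by (intro convex_on_add convex_on_cmul affine root)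
                   (auto intro!: divide_nonneg_nonneg real_sqrt_ge_zero sum_nonneg)
  moreover have "convex_on ?G (objective I eta V Dk a) \<longleftrightarrow> convex_on ?G ?F"
    by (rule convex_on_cong) (rule obj)
  ultimately show ?thesis
    by blast
qed

theorem lemma4:
  fixes I eta V lam T0 B sigma2 Q M :: real
    and Dk Lmin Ck f Omega xi E0 :: "real^'k"
    and h Rul Rdl :: "real^'s^'k"
  assumes "I > 0" and "eta > 0" and "V > 0" and "lam > 0"
    and "\<forall>k. Dk$k > 0"
    and "\<forall>k. a_coef lam (Lmin$k) > 0"
    and "\<forall>k. Ck$k > 0" and "\<forall>k. f$k > 0" and "T0 > 0" and "B > 0"
    and "sigma2 > 0" and "Q > 0"
    and "\<forall>k s. h$k$s \<noteq> 0"
    and "\<forall>k s. Rul$k$s > 0" and "\<forall>k s. Rdl$k$s > 0"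
    and "\<forall>k. Omega$k > 0" and "\<forall>k. xi$k > 0" and "\<forall>k. E0$k > 0" and "M > 0"
  defines "a \<equiv> (\<chi> k. a_coef lam (Lmin$k))"
  defines "Dom \<equiv> feasible_set Ck Dk f T0 B sigma2 Q h Rul Rdl Omega xi E0 M
                   \<inter> objective_domain a"
  shows "convex Dom \<and>
         convex_on Dom (\<lambda>(g, Mt, Tul, Tdl). objective I eta V Dk a g)"
proof -
  have dom: "objective_domain a = fst -` {g. \<forall>k. (g$k)\<^sup>2 < a$k}"
    by (auto simp: objective_domain_def)
  have obj: "(\<lambda>(g, Mt, Tul, Tdl). objective I eta V Dk a g) = (\<lambda>x. objective I eta V Dk a (fst x))"
    by auto
  have on_dom: "convex_on (objective_domain a) (\<lambda>(g, Mt, Tul, Tdl). objective I eta V Dk a g)"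
    unfolding dom obj using assms(1-3,5)
    by (intro convex_on_linear_vimage[OF linear_fst] convex_on_objective) (auto simp: less_imp_le)
  have "convex Dom"
    unfolding Dom_def using convex_feasible_set convex_on_imp_convex[OF on_dom] by (rule convex_Int)
  moreover have "Dom \<subseteq> objective_domain a"
    unfolding Dom_def by blast
  ultimately show ?thesis
    using convex_on_subset[OF on_dom] by blast
qed

end
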